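(* For all $k\in\mathbb N$: (a) for all $f:\Xi_k\to\mathbb R$ and $g:\Xi_{k-1}\to\mathbb R$, $$\langle \mathfrak a_k g,f\rangle_{\alpha,k}=\frac{k}{|\alpha|+k-1}\langle g,\mathfrak a^\dagger_{k-1}f\rangle_{\alpha,k-1};$$ (b) $L^2(\mu_{\alpha,k})=\mathrm{Im}\,\mathfrak a_k\oplus\mathrm{Ker}\,\mathfrak a^\dagger_{k-1}$, an orthogonal direct sum.
   Context: $V$ is a finite set, $\alpha=(\alpha_x)_{x\in V}$ positive, $|\alpha|=\sum_x\alpha_x$. $\Xi_k:=\{\eta\in\mathbb N_0^V:\sum_x\eta_x=k\}$, $\Xi_0=\{0\}$ (functions on it are constants). $\mu_{\alpha,k}(\eta)=Z_{\alpha,k}^{-1}\prod_x\frac{\Gamma(\alpha_x+\eta_x)}{\Gamma(\alpha_x)\eta_x!}$ with $Z_{\alpha,k}=\frac{\Gamma(|\alpha|+k)}{\Gamma(|\alpha|)k!}$ (a probability measure on $\Xi_k$), and $\langle f,g\rangle_{\alpha,k}=\sum_{\eta\in\Xi_k}\mu_{\alpha,k}(\eta)f(\eta)g(\eta)$, defining $L^2(\mu_{\alpha,k})$. The annihilation operator $\mathfrak a_k:\mathbb R^{\Xi_{k-1}}\to\mathbb R^{\Xi_k}$ is $\mathfrak a_kg(\eta)=\sum_x\eta_x\,g(\eta-\delta_x)$ (terms with $\eta_x=0$ vanish), and the creation operator $\mathfrak a^\dagger_{k-1}:\mathbb R^{\Xi_k}\to\mathbb R^{\Xi_{k-1}}$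 is $\mathfrak a^\dagger_{k-1}f(\xi)=\sum_x(\xi_x+\alpha_x)f(\xi+\delta_x)$. *)

theory Defs
  imports "HOL-Analysis.Analysis"
begin

definition Xi :: "'v set \<Rightarrow> nat \<Rightarrow> ('v \<Rightarrow> nat) set" where
  "Xi V k = {\<eta>. (\<forall>x. x \<notin> V \<longrightarrow> \<eta> x = 0) \<and> (\<Sum>x\<in>V. \<eta> x) = k}"

definition Zc :: "'v set \<Rightarrow> ('v \<Rightarrow> real) \<Rightarrow> nat \<Rightarrow> real" where
  "Zc V \<alpha> k = Gamma (sum \<alpha> V + real k) / (Gamma (sum \<alpha> V) * fact k)"

definition mu :: "'v set \<Rightarrow> ('v \<Rightarrow> real) \<Rightarrow> nat \<Rightarrow> ('v \<Rightarrow> nat) \<Rightarrow> real" where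
  "mu V \<alpha> k \<eta> = (\<Prod>x\<in>V. Gamma (\<alpha> x + real (\<eta> x)) / (Gamma (\<alpha> x) * fact (\<eta> x))) / Zc V \<alpha> k"

definition inner_mu :: "'v set \<Rightarrow> ('v \<Rightarrow> real) \<Rightarrow> nat \<Rightarrow> (('v \<Rightarrow> nat) \<Rightarrow> real)
    \<Rightarrow> (('v \<Rightarrow> nat) \<Rightarrow> real) \<Rightarrow> real" where
  "inner_mu V \<alpha> k f g = (\<Sum>\<eta>\<in>Xi V k. mu V \<alpha> k \<eta> * f \<eta> * g \<eta>)"

text \<open>Annihilation operator: \<open>(a g)(\<eta>) = \<Sum>x \<eta>_x g(\<eta> - \<delta>_x)\<close>; terms with \<open>\<eta>_x = 0\<close> vanish.\<close>
definition ann :: "'v set \<Rightarrow> (('v \<Rightarrow> nat) \<Rightarrow> real) \<Rightarrow> ('v \<Rightarrow> nat) \<Rightarrow> real" where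
  "ann V g \<eta> = (\<Sum>x\<in>V. real (\<eta> x) * g (\<eta>(x := \<eta> x - 1)))"

definition cre :: "'v set \<Rightarrow> ('v \<Rightarrow> real) \<Rightarrow> (('v \<Rightarrow> nat) \<Rightarrow> real) \<Rightarrow> ('v \<Rightarrow> nat) \<Rightarrow> real" where
  "cre V \<alpha> f \<xi> = (\<Sum>x\<in>V. (real (\<xi> x) + \<alpha> x) * f (\<xi>(x := \<xi> x + 1)))"

end

theory Submission
  imports Defs
begin

(* Part (a): substituting eta = xi + delta_x in the sum defining <a g, f> moves it to Xi_(k-1),
   and the weights, written with Pochhammer symbols as
   mu_k(eta) = prod_x ((alpha_x)_(eta_x) / eta_x!) / ((|alpha|)_k / k!), satisfy
   mu_k(xi + delta_x) (xi_x + 1) = k / (|alpha| + k - 1) * mu_(k-1)(xi) (xi_x + alpha_x),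
   which is exactly the coefficient of the creation operator.
   Part (b): the image of a_k is spanned by the images of the indicators of the points of
   Xi_(k-1), so Gram-Schmidt gives the orthogonal projection of f onto it; by (a), f minus
   its projection is annihilated by the creation operator, and positivity of mu_k makes the
   sum direct. *)

definition weighted_inner :: "'a set \<Rightarrow> ('a \<Rightarrow> real) \<Rightarrow> ('a \<Rightarrow> real) \<Rightarrow> ('a \<Rightarrow> real) \<Rightarrow> real" where
  "weighted_inner X w p q = (\<Sum>\<eta>\<in>X. w \<eta> * p \<eta> * q \<eta>)"

lemma weighted_inner_commute: "weighted_inner X w p q = weighted_inner X w q p"
  unfolding weighted_inner_def by (simp add: mult_ac)

lemma weighted_inner_diff_left:
  "weighted_inner X w (\<lambda>\<eta>. p \<eta> - t * q \<eta>) v = weighted_inner X w p v - t * weighted_inner X w q v"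
  unfolding weighted_inner_def by (simp add: algebra_simps sum_subtractf sum_distrib_left)

lemma weighted_inner_add_right:
  "weighted_inner X w p (\<lambda>\<eta>. q \<eta> + v \<eta>) = weighted_inner X w p q + weighted_inner X w p v"
  unfolding weighted_inner_def by (simp add: algebra_simps sum.distrib)

lemma weighted_inner_sum_right:
  "weighted_inner X w p (\<lambda>\<eta>. \<Sum>i\<in>S. c i * u i \<eta>) = (\<Sum>i\<in>S. c i * weighted_inner X w p (u i))"
  unfolding weighted_inner_def sum_distrib_left by (subst sum.swap) (simp add: mult_ac)

lemma weighted_inner_self_eq_0_iff:
  assumes "finite X" "\<forall>\<eta>\<in>X. w \<eta> > 0"
  shows "weighted_inner X w p p = 0 \<longleftrightarrow> (\<forall>\<eta>\<in>X. p \<eta> = 0)"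
  using assms unfolding weighted_inner_def
  by (subst sum_nonneg_eq_0_iff) (auto simp: mult.assoc, metis less_irrefl)

lemma weighted_inner_eq_0_if_self_eq_0:
  assumes "\<forall>\<eta>\<in>X. w \<eta> \<ge> 0" "weighted_inner X w q q = 0"
  shows "weighted_inner X w p q = 0"
proof (cases "finite X")
  case True
  then have "\<forall>\<eta>\<in>X. w \<eta> * q \<eta> * q \<eta> = 0"
    using assms unfolding weighted_inner_def by (subst sum_nonneg_eq_0_iff[symmetric]) (auto simp: mult.assoc)
  then show ?thesis
    unfolding weighted_inner_def by (intro sum.neutral) (metis mult_eq_0_iff mult.commute mult.left_commute)
qed (simp add: weighted_inner_def)

lemma exists_orthogonal_projection_span:
  assumes "\<forall>\<eta>\<in>X. w \<eta> \<ge> 0" "finite S"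
  shows "\<exists>c. \<forall>j\<in>S. weighted_inner X w (\<lambda>\<eta>. f \<eta> - (\<Sum>i\<in>S. c i * u i \<eta>)) (u j) = 0"
  using assms(2)
proof (induction S arbitrary: f rule: finite_induct)
  case empty
  show ?case by simp
next
  case (insert a S)
  let ?B = "weighted_inner X w"
  obtain c1 where c1: "\<forall>j\<in>S. ?B (\<lambda>\<eta>. f \<eta> - (\<Sum>i\<in>S. c1 i * u i \<eta>)) (u j) = 0"
    using insert.IH by blast
  obtain d where d: "\<forall>j\<in>S. ?B (\<lambda>\<eta>. u a \<eta> - (\<Sum>i\<in>S. d i * u i \<eta>)) (u j) = 0"
    using insert.IH by blast
  define r where "r \<eta> = f \<eta> - (\<Sum>i\<in>S. c1 i * u i \<eta>)" for \<eta>
  define s where "s \<eta> = u a \<eta> - (\<Sum>i\<in>S. d i * u i \<eta>)" for \<eta>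
  define t where "t = ?B r s / ?B s s"
  define c where "c i = (if i = a then t else c1 i - t * d i)" for i
  have residual: "(\<lambda>\<eta>. f \<eta> - (\<Sum>i\<in>insert a S. c i * u i \<eta>)) = (\<lambda>\<eta>. r \<eta> - t * s \<eta>)"
  proof
    fix \<eta>
    have "(\<Sum>i\<in>S. c i * u i \<eta>) = (\<Sum>i\<in>S. c1 i * u i \<eta> - t * (d i * u i \<eta>))"
      using insert.hyps by (intro sum.cong) (auto simp: c_def algebra_simps)
    then show "f \<eta> - (\<Sum>i\<in>insert a S. c i * u i \<eta>) = r \<eta> - t * s \<eta>"
      using insert.hyps by (simp add: c_def r_def s_def sum_subtractf sum_distrib_left algebra_simps)
  qed
  have orth_S: "\<forall>j\<in>S. ?B (\<lambda>\<eta>. r \<eta> - t * s \<eta>) (u j) = 0"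
    using c1 d by (simp add: weighted_inner_diff_left r_def[abs_def] s_def[abs_def])
  \<comment> \<open>If \<open>s\<close> is null then so is \<open>?B r s\<close>, and \<open>t = 0\<close> by the convention \<open>x / 0 = 0\<close>.\<close>
  have orth_s: "?B (\<lambda>\<eta>. r \<eta> - t * s \<eta>) s = 0"
    unfolding weighted_inner_diff_left
    using weighted_inner_eq_0_if_self_eq_0[OF assms(1), of s r]
    by (cases "?B s s = 0") (simp_all add: t_def)
  have "u a = (\<lambda>\<eta>. s \<eta> + (\<Sum>i\<in>S. d i * u i \<eta>))"
    by (simp add: s_def)
  then have "?B (\<lambda>\<eta>. r \<eta> - t * s \<eta>) (u a) = 0"
    using orth_S orth_s by (simp add: weighted_inner_add_right weighted_inner_sum_right)
  then show ?case
    using orth_S residual by (intro exI[of _ c]) simp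
qed

lemma finite_Xi: "finite V \<Longrightarrow> finite (Xi V k)"
proof -
  assume "finite V"
  have "Xi V k \<subseteq> {\<eta>. \<forall>x. (x \<in> V \<longrightarrow> \<eta> x \<in> {0..k}) \<and> (x \<notin> V \<longrightarrow> \<eta> x = 0)}"
    using member_le_sum[of _ V] \<open>finite V\<close> by (fastforce simp: Xi_def)
  then show ?thesis
    using finite_subset finite_set_of_finite_funs[OF \<open>finite V\<close>, of "{0..k}" 0] by blast
qed

lemma nonempty_if_in_Xi_Suc: "\<eta> \<in> Xi V (Suc m) \<Longrightarrow> V \<noteq> {}"
  by (auto simp: Xi_def)

lemma sum_fun_upd_add:
  fixes \<xi> :: "'v \<Rightarrow> nat"
  assumes "finite V" "x \<in> V"
  shows "(\<Sum>y\<in>V. (\<xi>(x := n)) y) + \<xi> x = (\<Sum>y\<in>V. \<xi> y) + n"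
  using assms by (simp add: sum.remove)

lemma fun_upd_Suc_in_Xi:
  "finite V \<Longrightarrow> x \<in> V \<Longrightarrow> \<xi> \<in> Xi V m \<Longrightarrow> \<xi>(x := \<xi> x + 1) \<in> Xi V (Suc m)"
  using sum_fun_upd_add[of V x \<xi> "\<xi> x + 1"] by (auto simp: Xi_def)

lemma fun_upd_pred_in_Xi:
  "finite V \<Longrightarrow> x \<in> V \<Longrightarrow> \<eta> \<in> Xi V (Suc m) \<Longrightarrow> \<eta> x \<ge> 1 \<Longrightarrow> \<eta>(x := \<eta> x - 1) \<in> Xi V m"
  using sum_fun_upd_add[of V x \<eta> "\<eta> x - 1"] by (auto simp: Xi_def)

lemma sum_Xi_Suc_shift:
  assumes "finite V" "x \<in> V"
  shows "(\<Sum>\<eta>\<in>Xi V (Suc m). real (\<eta> x) * F \<eta>)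
       = (\<Sum>\<xi>\<in>Xi V m. (real (\<xi> x) + 1) * F (\<xi>(x := \<xi> x + 1)))"
proof -
  have "(\<Sum>\<eta>\<in>Xi V (Suc m). real (\<eta> x) * F \<eta>) = (\<Sum>\<eta>\<in>{\<eta>\<in>Xi V (Suc m). \<eta> x \<ge> 1}. real (\<eta> x) * F \<eta>)"
    by (rule sum.mono_neutral_right) (auto simp: finite_Xi assms)
  also have "\<dots> = (\<Sum>\<xi>\<in>Xi V m. (real (\<xi> x) + 1) * F (\<xi>(x := \<xi> x + 1)))"
    by (rule sum.reindex_bij_witness[where j = "\<lambda>\<eta>. \<eta>(x := \<eta> x - 1)" and i = "\<lambda>\<xi>. \<xi>(x := \<xi> x + 1)"])
       (use assms fun_upd_Suc_in_Xi[OF assms] fun_upd_pred_in_Xi[OF assms] in \<open>auto simp: of_nat_diff\<close>)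
  finally show ?thesis .
qed

lemma Gamma_ratio_eq_pochhammer:
  "(a::real) > 0 \<Longrightarrow> Gamma (a + real n) / Gamma a = pochhammer a n"
  by (subst pochhammer_Gamma) (auto dest: nonpos_Ints_nonpos)

lemma mu_eq_pochhammer:
  assumes "\<forall>x\<in>V. \<alpha> x > 0" "sum \<alpha> V > 0"
  shows "mu V \<alpha> k \<eta> = (\<Prod>x\<in>V. pochhammer (\<alpha> x) (\<eta> x) / fact (\<eta> x))
                        / (pochhammer (sum \<alpha> V) k / fact k)"
proof -
  have "Gamma (\<alpha> x + real (\<eta> x)) / (Gamma (\<alpha> x) * fact (\<eta> x))
        = pochhammer (\<alpha> x) (\<eta> x) / fact (\<eta> x)" if "x \<in> V" for x
    using Gamma_ratio_eq_pochhammer[of "\<alpha> x" "\<eta> x"] assms(1) that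
    by (metis divide_divide_eq_left)
  moreover have "Zc V \<alpha> k = pochhammer (sum \<alpha> V) k / fact k"
    using Gamma_ratio_eq_pochhammer[OF assms(2), of k] unfolding Zc_def
    by (metis divide_divide_eq_left)
  ultimately show ?thesis
    unfolding mu_def by (metis (no_types, lifting) prod.cong)
qed

lemma mu_pos:
  assumes "finite V" "V \<noteq> {}" "\<forall>x\<in>V. \<alpha> x > 0"
  shows "mu V \<alpha> k \<eta> > 0"
proof -
  have "sum \<alpha> V > 0"
    using assms by (simp add: sum_pos)
  then show ?thesis
    using assms(3) by (simp add: mu_eq_pochhammer pochhammer_pos prod_pos)
qed

lemma mu_pos_Xi_Suc:
  assumes "finite V" "\<forall>x\<in>V. \<alpha> x > 0" "\<eta> \<in> Xi V (Suc m)"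
  shows "mu V \<alpha> (Suc m) \<eta> > 0"
  using mu_pos[OF assms(1) nonempty_if_in_Xi_Suc[OF assms(3)] assms(2)] .

lemma mu_add_site:
  assumes "finite V" "x \<in> V" "\<forall>y\<in>V. \<alpha> y > 0"
  shows "mu V \<alpha> (Suc m) (\<xi>(x := \<xi> x + 1)) * (real (\<xi> x) + 1)
         = real (Suc m) / (sum \<alpha> V + real m) * (mu V \<alpha> m \<xi> * (real (\<xi> x) + \<alpha> x))"
proof -
  define p where "p n = pochhammer (\<alpha> x) n / fact n" for n
  define Q where "Q n = pochhammer (sum \<alpha> V) n / fact n" for n
  define P where "P = (\<Prod>y\<in>V - {x}. pochhammer (\<alpha> y) (\<xi> y) / fact (\<xi> y) :: real)"
  have \<alpha>V: "sum \<alpha> V > 0"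
    using assms by (intro sum_pos2[of V x]) auto
  have shifted: "mu V \<alpha> (Suc m) (\<xi>(x := \<xi> x + 1)) = p (Suc (\<xi> x)) * P / Q (Suc m)"
    using assms \<alpha>V by (simp add: mu_eq_pochhammer prod.remove p_def P_def Q_def)
  have unshifted: "mu V \<alpha> m \<xi> = p (\<xi> x) * P / Q m"
    using assms \<alpha>V by (simp add: mu_eq_pochhammer prod.remove p_def P_def Q_def)
  have site: "p (Suc (\<xi> x)) * (real (\<xi> x) + 1) = p (\<xi> x) * (real (\<xi> x) + \<alpha> x)"
    by (simp add: p_def pochhammer_Suc fact_Suc add.commute)
  have norm: "Q (Suc m) = Q m * (sum \<alpha> V + real m) / real (Suc m)"
    by (simp add: Q_def pochhammer_Suc fact_Suc field_simps)
  have "Q m > 0" "sum \<alpha> V + real m > 0"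
    using \<alpha>V by (simp_all add: Q_def pochhammer_pos)
  then have "p (Suc (\<xi> x)) * P / Q (Suc m) * (real (\<xi> x) + 1)
      = real (Suc m) / (sum \<alpha> V + real m) * (p (Suc (\<xi> x)) * (real (\<xi> x) + 1) * P / Q m)"
    unfolding norm by (simp add: field_simps)
  then show ?thesis
    unfolding shifted unshifted site by (simp add: ac_simps)
qed

lemma inner_mu_eq_weighted_inner: "inner_mu V \<alpha> k = weighted_inner (Xi V k) (mu V \<alpha> k)"
  by (simp add: fun_eq_iff inner_mu_def weighted_inner_def)

lemma inner_mu_indicator:
  assumes "finite V" "\<xi> \<in> Xi V m"
  shows "inner_mu V \<alpha> m (indicator {\<xi>}) h = mu V \<alpha> m \<xi> * h \<xi>"
proof -
  have "inner_mu V \<alpha> m (indicator {\<xi>}) h = (\<Sum>\<eta>\<in>Xi V m. if \<eta> = \<xi> then mu V \<alpha> m \<xi> * h \<xi> else 0)"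
    unfolding inner_mu_def by (intro sum.cong) auto
  then show ?thesis
    using assms by (simp add: finite_Xi)
qed

lemma ann_sum: "ann V (\<lambda>\<zeta>. \<Sum>i\<in>S. c i * u i \<zeta>) \<eta> = (\<Sum>i\<in>S. c i * ann V (u i) \<eta>)"
  unfolding ann_def sum_distrib_left by (subst sum.swap) (simp add: mult_ac)

lemma inner_mu_ann_cre:
  assumes "finite V" "\<forall>x\<in>V. \<alpha> x > 0"
  shows "inner_mu V \<alpha> (Suc m) (ann V g) f
       = real (Suc m) / (sum \<alpha> V + real m) * inner_mu V \<alpha> m g (cre V \<alpha> f)"
proof -
  let ?c = "real (Suc m) / (sum \<alpha> V + real m)"
  have "inner_mu V \<alpha> (Suc m) (ann V g) f
      = (\<Sum>x\<in>V. \<Sum>\<eta>\<in>Xi V (Suc m). real (\<eta> x) * (mu V \<alpha> (Suc m) \<eta> * g (\<eta>(x := \<eta> x - 1)) * f \<eta>))"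
    unfolding inner_mu_def ann_def
    by (subst sum.swap) (simp add: sum_distrib_left sum_distrib_right mult_ac)
  also have "\<dots> = (\<Sum>x\<in>V. \<Sum>\<xi>\<in>Xi V m.
      (mu V \<alpha> (Suc m) (\<xi>(x := \<xi> x + 1)) * (real (\<xi> x) + 1)) * g \<xi> * f (\<xi>(x := \<xi> x + 1)))"
    by (rule sum.cong[OF refl], subst sum_Xi_Suc_shift[OF assms(1)]) (simp_all add: mult_ac)
  also have "\<dots> = (\<Sum>x\<in>V. \<Sum>\<xi>\<in>Xi V m.
      ?c * (mu V \<alpha> m \<xi> * (real (\<xi> x) + \<alpha> x)) * g \<xi> * f (\<xi>(x := \<xi> x + 1)))"
    by (intro sum.cong refl) (simp only: mu_add_site[OF assms(1) _ assms(2)])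
  also have "\<dots> = ?c * inner_mu V \<alpha> m g (cre V \<alpha> f)"
    unfolding inner_mu_def cre_def
    by (subst sum.swap) (simp add: sum_distrib_left mult_ac)
  finally show ?thesis .
qed

lemma cre_eq_0_if_orthogonal_to_ann_indicator:
  assumes "finite V" "\<forall>x\<in>V. \<alpha> x > 0" "\<xi> \<in> Xi V m"
    and "inner_mu V \<alpha> (Suc m) (ann V (indicator {\<xi>})) h = 0"
  shows "cre V \<alpha> h \<xi> = 0"
proof (cases "V = {}")
  case True
  then show ?thesis by (simp add: cre_def)
next
  case False
  have "sum \<alpha> V > 0" "mu V \<alpha> m \<xi> > 0"
    using assms False by (simp_all add: sum_pos mu_pos)
  moreover have "inner_mu V \<alpha> (Suc m) (ann V (indicator {\<xi>})) h
      = real (Suc m) / (sum \<alpha> V + real m) * (mu V \<alpha> m \<xi> * cre V \<alpha> h \<xi>)"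
    by (simp only: inner_mu_ann_cre[OF assms(1,2)] inner_mu_indicator[OF assms(1,3)])
  ultimately show ?thesis
    using assms(4) by simp
qed

lemma ann_image_plus_cre_kernel:
  assumes "finite V" "\<forall>x\<in>V. \<alpha> x > 0"
  shows "\<exists>g h. (\<forall>\<xi>\<in>Xi V m. cre V \<alpha> h \<xi> = 0) \<and> (\<forall>\<eta>\<in>Xi V (Suc m). f \<eta> = ann V g \<eta> + h \<eta>)"
proof -
  let ?u = "\<lambda>\<xi>. ann V (indicator {\<xi>})"
  have "\<forall>\<eta>\<in>Xi V (Suc m). mu V \<alpha> (Suc m) \<eta> \<ge> 0"
    using mu_pos_Xi_Suc[OF assms] by (simp add: less_imp_le)
  then obtain c where c: "\<forall>\<xi>\<in>Xi V m. weighted_inner (Xi V (Suc m)) (mu V \<alpha> (Suc m))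
      (\<lambda>\<eta>. f \<eta> - (\<Sum>\<xi>'\<in>Xi V m. c \<xi>' * ?u \<xi>' \<eta>)) (?u \<xi>) = 0"
    using exists_orthogonal_projection_span[OF _ finite_Xi[OF assms(1)], where f = f and u = ?u] by blast
  define g where "g \<zeta> = (\<Sum>\<xi>\<in>Xi V m. c \<xi> * indicator {\<xi>} \<zeta>)" for \<zeta>
  define h where "h \<eta> = f \<eta> - ann V g \<eta>" for \<eta>
  have "inner_mu V \<alpha> (Suc m) (?u \<xi>) h = weighted_inner (Xi V (Suc m)) (mu V \<alpha> (Suc m))
      (\<lambda>\<eta>. f \<eta> - (\<Sum>\<xi>'\<in>Xi V m. c \<xi>' * ?u \<xi>' \<eta>)) (?u \<xi>)" for \<xi>
    unfolding inner_mu_eq_weighted_inner h_def g_def ann_sum by (rule weighted_inner_commute)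
  then have "inner_mu V \<alpha> (Suc m) (?u \<xi>) h = 0" if "\<xi> \<in> Xi V m" for \<xi>
    using c that by simp
  then have "\<forall>\<xi>\<in>Xi V m. cre V \<alpha> h \<xi> = 0"
    using cre_eq_0_if_orthogonal_to_ann_indicator[OF assms] by blast
  moreover have "f \<eta> = ann V g \<eta> + h \<eta>" for \<eta>
    by (simp add: h_def)
  ultimately show ?thesis
    by blast
qed

lemma ann_eq_0_if_cre_ann_eq_0:
  assumes "finite V" "\<forall>x\<in>V. \<alpha> x > 0"
    and "\<forall>\<xi>\<in>Xi V m. cre V \<alpha> (ann V g) \<xi> = 0" "\<eta> \<in> Xi V (Suc m)"
  shows "ann V g \<eta> = 0"
proof -
  have "inner_mu V \<alpha> (Suc m) (ann V g) (ann V g) = 0"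
    using assms(3) unfolding inner_mu_ann_cre[OF assms(1,2)] by (simp add: inner_mu_def)
  moreover have "\<forall>\<eta>\<in>Xi V (Suc m). mu V \<alpha> (Suc m) \<eta> > 0"
    using mu_pos_Xi_Suc[OF assms(1,2)] by blast
  ultimately show ?thesis
    using weighted_inner_self_eq_0_iff[OF finite_Xi[OF assms(1)]] assms(4)
    by (simp add: inner_mu_eq_weighted_inner)
qed

theorem proposition3p1:
  fixes V :: "'v set" and \<alpha> :: "'v \<Rightarrow> real" and k :: nat
  assumes "finite V" and "\<forall>x\<in>V. \<alpha> x > 0" and "k \<ge> 1"
  shows "(\<forall>f g. inner_mu V \<alpha> k (ann V g) f
            = real k / (sum \<alpha> V + real k - 1) * inner_mu V \<alpha> (k - 1) g (cre V \<alpha> f))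
    \<and> (\<forall>f. \<exists>g h. (\<forall>\<xi>\<in>Xi V (k - 1). cre V \<alpha> h \<xi> = 0)
                 \<and> (\<forall>\<eta>\<in>Xi V k. f \<eta> = ann V g \<eta> + h \<eta>))
    \<and> (\<forall>g h. (\<forall>\<xi>\<in>Xi V (k - 1). cre V \<alpha> h \<xi> = 0) \<longrightarrow> inner_mu V \<alpha> k (ann V g) h = 0)
    \<and> (\<forall>g. (\<forall>\<xi>\<in>Xi V (k - 1). cre V \<alpha> (ann V g) \<xi> = 0) \<longrightarrow> (\<forall>\<eta>\<in>Xi V k. ann V g \<eta> = 0))"
proof -
  obtain m where k: "k = Suc m"
    using assms(3) by (cases k) auto
  have adjoint: "inner_mu V \<alpha> k (ann V g) f
      = real k / (sum \<alpha> V + real k - 1) * inner_mu V \<alpha> (k - 1) g (cre V \<alpha> f)" for f g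
    using inner_mu_ann_cre[OF assms(1,2)] by (simp add: k add_ac)
  have orthogonal: "inner_mu V \<alpha> k (ann V g) h = 0"
    if "\<forall>\<xi>\<in>Xi V (k - 1). cre V \<alpha> h \<xi> = 0" for g h
    using that unfolding adjoint by (simp add: inner_mu_def)
  show ?thesis
    using adjoint orthogonal ann_image_plus_cre_kernel[OF assms(1,2), of "k - 1"]
      ann_eq_0_if_cre_ann_eq_0[OF assms(1,2), of "k - 1"]
    unfolding k diff_Suc_1 by blast
qed

end
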